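(* Let $S_1$ be an arbitrary path string (possibly not canonical) and let $S_2$ be a canonical path string, and assume that neither contains symbolic links. Then $\mathrm{sanitize}(S_1,[S_2])$ returns true if and only if $S_1$ and $S_2$ refer to the same file on the file system.
   Context: Path strings are strings over valid filename characters together with "." and "/". Tokenization of a path string splits it on every maximal run of one or more consecutive "/" characters and discards empty pieces (as C's strtok_r with separator "/" does); e.g. "//a//b/c" tokenizes to a, b, c. A path string is canonical (canonicalized) if it is "/" or of the form "/$a_1$/$a_2$/.../$a_n$" with $n\ge 1$, where each $a_j$ is a nonempty filename containing no "/" and different from "." and "..". The algorithm sanitize takes a path string $U$ and a list $W$ of path strings. It starts with an empty stack of tokens and processes the tokens of $U$ from left to right: if the token is "..", it pops the top of the stack if the stack is nonempty and otherwise does nothing; if the token is ".", it does nothing; otherwise it pushes the token. The string representation of the final stack with contents $t_1,\dots,t_m$ (bottom to top) is "/" if $m=0$ and "/$t_1$/$t_2$/.../$t_m$" (no trailing slash) if $m\ge1$. sanitize returns true if this string is an element of $W$ (exact string equality) and false otherwise. Path strings are interpreted in a hierarchical (tree-shaped) file system rooted at "/", with no symbolic links and no wildcards: starting at the root, a filename token moves to the child of that name, "." stays in the current directory, and ".." moves to the parent directory (the parent of the root being the root). Two path strings refer to the same file if this resolution leads to the same file. *)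

theory Defs
  imports Main
begin

definition slash :: char where "slash = CHR ''/''"

text \<open>Valid filename characters: anything except the separator and NUL.
  Path strings are strings over these characters together with dot and slash
  (dot is already a valid filename character).\<close>
definition valid_fname_char :: "char \<Rightarrow> bool" where
  "valid_fname_char c \<longleftrightarrow> c \<noteq> slash \<and> c \<noteq> CHR 0x00"

definition path_string :: "string \<Rightarrow> bool" where
  "path_string s \<longleftrightarrow> (\<forall>c \<in> set s. valid_fname_char c \<or> c = CHR ''.'' \<or> c = slash)"

fun split_slash :: "string \<Rightarrow> string list" where
  "split_slash [] = [[]]"
| "split_slash (c # cs) =
     (if c = slash then [] # split_slash cs
      else (case split_slash cs of w # ws \<Rightarrow> (c # w) # ws | [] \<Rightarrow> [[c]]))"

text \<open>Tokenization as with strtok_r: split on maximal runs of slashes, discard empty pieces.\<close>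
definition tokens :: "string \<Rightarrow> string list" where
  "tokens s = filter (\<lambda>t. t \<noteq> []) (split_slash s)"

definition good_name :: "string \<Rightarrow> bool" where
  "good_name a \<longleftrightarrow> a \<noteq> [] \<and> slash \<notin> set a \<and> a \<noteq> ''.'' \<and> a \<noteq> ''..''"

definition canonical :: "string \<Rightarrow> bool" where
  "canonical s \<longleftrightarrow> s = ''/'' \<or>
     (\<exists>as. as \<noteq> [] \<and> (\<forall>a \<in> set as. good_name a) \<and> s = concat (map (\<lambda>a. ''/'' @ a) as))"

text \<open>Stack is a list, bottom first, top last.\<close>
definition san_step :: "string \<Rightarrow> string list \<Rightarrow> string list" where
  "san_step t st = (if t = ''..'' then (if st = [] then st else butlast st)
                    else if t = ''.'' then st else st @ [t])"

definition stack_repr :: "string list \<Rightarrow> string" where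
  "stack_repr st = (if st = [] then ''/'' else concat (map (\<lambda>t. ''/'' @ t) st))"

definition sanitize :: "string \<Rightarrow> string list \<Rightarrow> bool" where
  "sanitize U W \<longleftrightarrow> stack_repr (fold san_step (tokens U) []) \<in> set W"

text \<open>A file of the tree-shaped namespace rooted at the root is identified by the
  sequence of names leading to it from the root (root = empty sequence).\<close>
type_synonym fs_file = "string list"

definition fs_root :: fs_file where "fs_root = []"
definition fs_child :: "fs_file \<Rightarrow> string \<Rightarrow> fs_file" where "fs_child d a = d @ [a]"
definition fs_parent :: "fs_file \<Rightarrow> fs_file" where
  "fs_parent d = (if d = fs_root then fs_root else butlast d)"

definition resolve_step :: "string \<Rightarrow> fs_file \<Rightarrow> fs_file" where
  "resolve_step t d = (if t = ''.'' then d else if t = ''..'' then fs_parent d else fs_child d t)"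

definition resolve :: "string \<Rightarrow> fs_file" where
  "resolve s = fold resolve_step (tokens s) fs_root"

definition same_file :: "string \<Rightarrow> string \<Rightarrow> bool" where
  "same_file s1 s2 \<longleftrightarrow> resolve s1 = resolve s2"

end

theory Submission
  imports Defs
begin

text \<open>The stack machine of sanitize performs exactly the resolution of a path in the
  tree-shaped file system, so sanitize S1 [S2] tests whether the string representation
  of the resolution of S1 equals S2. A canonical path is the representation of its own
  resolution, and the representation is injective on stacks of good names, since
  tokenizing it gives the stack back. Hence both sides say that S1 and S2 resolve to the
  same file.\<close>

lemma san_step_eq_resolve_step: "san_step = resolve_step"
  by (auto simp: fun_eq_iff san_step_def resolve_step_def fs_parent_def fs_root_def fs_child_def)

lemma sanitize_iff_resolve: "sanitize U W \<longleftrightarrow> stack_repr (resolve U) \<in> set W"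
  by (simp add: sanitize_def san_step_eq_resolve_step resolve_def fs_root_def)

lemma split_slash_not_Nil: "split_slash s \<noteq> []"
  by (induction s) (auto split: list.splits)

lemma slash_notin_split_slash: "w \<in> set (split_slash s) \<Longrightarrow> slash \<notin> set w"
  by (induction s arbitrary: w) (auto split: list.splits if_splits)

lemma split_slash_append:
  assumes "slash \<notin> set a"
  shows "split_slash (a @ s) = (a @ hd (split_slash s)) # tl (split_slash s)"
  using assms
proof (induction a)
  case Nil
  then show ?case using split_slash_not_Nil[of s] by (cases "split_slash s") auto
next
  case (Cons c a)
  then show ?case by auto
qed

lemma split_slash_stack_repr:
  assumes "\<forall>a \<in> set as. slash \<notin> set a" and "as \<noteq> []"
  shows "split_slash (stack_repr as) = [] # as"
  using assms
proof (induction as)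
  case Nil
  then show ?case by simp
next
  case (Cons a as)
  show ?case
  proof (cases "as = []")
    case True
    then show ?thesis using Cons.prems split_slash_append[of a "[]"]
      by (simp add: stack_repr_def slash_def)
  next
    case False
    then have "split_slash (stack_repr as) = [] # as"
      using Cons by simp
    then show ?thesis using Cons.prems False split_slash_append[of a "stack_repr as"]
      by (simp add: stack_repr_def slash_def)
  qed
qed

lemma tokens_stack_repr:
  assumes "\<forall>a \<in> set as. good_name a"
  shows "tokens (stack_repr as) = as"
proof (cases "as = []")
  case True
  then show ?thesis by (simp add: stack_repr_def tokens_def slash_def)
next
  case False
  with assms show ?thesis
    by (auto simp: tokens_def split_slash_stack_repr good_name_def filter_id_conv)
qed

lemma inj_on_stack_repr: "inj_on stack_repr {as. \<forall>a \<in> set as. good_name a}"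
  by (rule inj_on_inverseI[where g = tokens]) (simp add: tokens_stack_repr)

lemma fold_resolve_step_good_names_append:
  "\<forall>a \<in> set as. good_name a \<Longrightarrow> fold resolve_step as d = d @ as"
  by (induction as arbitrary: d) (auto simp: resolve_step_def good_name_def fs_child_def)

lemma resolve_step_good_names:
  assumes "\<forall>a \<in> set d. good_name a" and "t \<noteq> []" and "slash \<notin> set t"
  shows "\<forall>a \<in> set (resolve_step t d). good_name a"
  using assms by (auto simp: resolve_step_def fs_parent_def fs_root_def fs_child_def
      good_name_def dest: in_set_butlastD)

lemma fold_resolve_step_good_names_preserved:
  assumes "\<forall>t \<in> set ts. t \<noteq> [] \<and> slash \<notin> set t" and "\<forall>a \<in> set d. good_name a"
  shows "\<forall>a \<in> set (fold resolve_step ts d). good_name a"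
  using assms
proof (induction ts arbitrary: d)
  case Nil
  then show ?case by simp
next
  case (Cons t ts)
  have "t \<noteq> []" and "slash \<notin> set t"
    using Cons.prems(1) by simp_all
  with Cons.prems(2) have "\<forall>a \<in> set (resolve_step t d). good_name a"
    by (rule resolve_step_good_names)
  with Cons show ?case by simp
qed

lemma tokens_nonempty_slash_free: "t \<in> set (tokens s) \<Longrightarrow> t \<noteq> [] \<and> slash \<notin> set t"
  by (auto simp: tokens_def dest: slash_notin_split_slash)

lemma resolve_good_names: "\<forall>a \<in> set (resolve s). good_name a"
  unfolding resolve_def fs_root_def
  by (rule fold_resolve_step_good_names_preserved) (simp_all add: tokens_nonempty_slash_free)

lemma canonical_iff_stack_repr:
  "canonical s \<longleftrightarrow> (\<exists>as. (\<forall>a \<in> set as. good_name a) \<and> s = stack_repr as)"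
  unfolding canonical_def stack_repr_def by (metis empty_iff list.set(1))

lemma stack_repr_resolve_canonical:
  assumes "canonical s"
  shows "stack_repr (resolve s) = s"
proof -
  obtain as where good: "\<forall>a \<in> set as. good_name a" and s: "s = stack_repr as"
    using assms canonical_iff_stack_repr by blast
  have "resolve s = as"
    using good
    by (simp add: s resolve_def fs_root_def tokens_stack_repr fold_resolve_step_good_names_append)
  then show ?thesis by (simp add: s)
qed

theorem theorem1:
  assumes "path_string S1" and "path_string S2" and "canonical S2"
  shows "sanitize S1 [S2] \<longleftrightarrow> same_file S1 S2"
proof -
  have "sanitize S1 [S2] \<longleftrightarrow> stack_repr (resolve S1) = stack_repr (resolve S2)"
    using stack_repr_resolve_canonical[OF assms(3)] by (simp add: sanitize_iff_resolve)
  also have "\<dots> \<longleftrightarrow> resolve S1 = resolve S2"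
    using inj_on_stack_repr resolve_good_names by (auto dest: inj_onD)
  finally show ?thesis unfolding same_file_def .
qed

end
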